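(* There is a constant $C>0$ depending only on $\lambda$ such that: (i) for all $m<n$, $Q\in\mathcal D_m$, $R\in\mathcal D_n$ with $R\subset Q$, one has $|S_R-S_Q-S_{Q,R}|\le C\,a_m$; (ii) for all $m\le n$, $Q\in\mathcal D_m$, $\tilde R\in\mathcal D_n$, $R\in\mathcal D_{n+1}$ with $R\subset\tilde R\subset Q$, one has $|S_{Q,R}-S_{Q,\tilde R}|\le C\,a_n$.
   Context: Fix $(\lambda_n)_{n\ge1}$ and $\lambda$ with $\frac14\le\lambda_n\le\lambda<\frac12$. Starting from $Q_0=[0,1]^2\subset\mathbb{C}$, inductively replace each square of generation $n-1$ by its $4$ axis-parallel corner subsquares of side ratio $\lambda_n$; generation $n$ consists of $4^n$ closed squares of side $s_n=\lambda_1\cdots\lambda_n$ ($s_0=1$), forming the family $\mathcal D_n$. $K=\bigcap_n\bigcup_{Q\in\mathcal D_n}Q$, $\mu$ is the Borel probability measure on $K$ giving mass $4^{-n}$ to each $Q\in\mathcal D_n$, and $a_n=1/(4^ns_n)$. Let $C(z)=1/z$. For $Q\in\mathcal D_n$ set $S_Q=\frac{1}{\mu(Q)}\int_Q\int_{K\setminus Q}C(z-y)\,d\mu(y)\,d\mu(z)$. For $R\subset Q$ with $Q,R\in\mathcal D$ define the relative martingale $S_{Q,R}=\frac{1}{\mu(R)}\int_R\int_{Q\setminus R}C(z-y)\,d\mu(y)\,d\mu(z)$ (so $S_{Q,Q}=0$). *)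

theory Defs
  imports "HOL-Probability.Probability"
begin

definition side :: "(nat \<Rightarrow> real) \<Rightarrow> nat \<Rightarrow> real" where
  "side lam n = (\<Prod>k\<in>{1..n}. lam k)"

definition corner_off :: "nat \<Rightarrow> complex" where
  "corner_off d = (if d = 0 then 0 else if d = 1 then 1 else if d = 2 then \<i> else 1 + \<i>)"

text \<open>A square of generation n is addressed by a word w of n digits in {0..3};
  digit k (0-based) selects the corner subsquare at generation k+1.\<close>
definition sq_corner :: "(nat \<Rightarrow> real) \<Rightarrow> nat list \<Rightarrow> complex" where
  "sq_corner lam w = (\<Sum>k<length w. complex_of_real (side lam k - side lam (Suc k)) * corner_off (w ! k))"

definition sq :: "(nat \<Rightarrow> real) \<Rightarrow> nat list \<Rightarrow> complex set" where
  "sq lam w = {sq_corner lam w + complex_of_real x + \<i> * complex_of_real y | x y.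
                 0 \<le> x \<and> x \<le> side lam (length w) \<and> 0 \<le> y \<and> y \<le> side lam (length w)}"

definition words :: "nat \<Rightarrow> nat list set" where
  "words n = {w. length w = n \<and> set w \<subseteq> {0..<4}}"

definition gen :: "(nat \<Rightarrow> real) \<Rightarrow> nat \<Rightarrow> complex set set" where
  "gen lam n = sq lam ` words n"

definition cantorK :: "(nat \<Rightarrow> real) \<Rightarrow> complex set" where
  "cantorK lam = (\<Inter>n. \<Union>(gen lam n))"

definition a_seq :: "(nat \<Rightarrow> real) \<Rightarrow> nat \<Rightarrow> real" where
  "a_seq lam n = 1 / (4 ^ n * side lam n)"

definition cauchy_kernel :: "complex \<Rightarrow> complex" where
  "cauchy_kernel z = 1 / z"

definition S_mart :: "complex measure \<Rightarrow> complex set \<Rightarrow> complex set \<Rightarrow> complex" where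
  "S_mart \<mu> K Q = (1 / measure \<mu> Q) *\<^sub>R
     (LINT z:Q|\<mu>. (LINT y:(K - Q)|\<mu>. cauchy_kernel (z - y)))"

definition S_rel :: "complex measure \<Rightarrow> complex set \<Rightarrow> complex set \<Rightarrow> complex" where
  "S_rel \<mu> Q R = (1 / measure \<mu> R) *\<^sub>R
     (LINT z:R|\<mu>. (LINT y:(Q - R)|\<mu>. cauchy_kernel (z - y)))"

definition cantor_measure :: "(nat \<Rightarrow> real) \<Rightarrow> complex measure \<Rightarrow> bool" where
  "cantor_measure lam \<mu> \<longleftrightarrow> prob_space \<mu> \<and> sets \<mu> = sets borel \<and>
     emeasure \<mu> (cantorK lam) = 1 \<and>
     (\<forall>n. \<forall>Q\<in>gen lam n. measure \<mu> Q = 1 / 4 ^ n)"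

end

theory Submission
  imports Defs
begin

text \<open>
  Let P_A(z) be the integral of C(z - y) over y \<in> A. Then S_Q is the average of P_(K-Q) over Q
  and S_(Q,R) is the average of P_(Q-R) over R. Splitting K - R into K - Q and Q - R, part (i)
  reduces to comparing the averages of P_(K-Q) over R and over Q, which differ by at most twice
  the oscillation of P_(K-Q) on Q. Part (ii) is the same with Q - R split at R~, plus the average
  over R of P_(R~-R), which is O(a_n) because R~ - R has mass 4^-n and its part in K stays at
  distance of order s_n from R.

  The oscillation bound is where \<lambda> < 1/2 enters: a point of K that leaves the ancestors of
  Q \<in> D_n at generation j lies in an ancestor of mass 4^-j at distance \<ge> (1 - 2\<lambda>) s_j from Q,
  so the oscillation is at most a constant times \<Sum>_(j<n) 4^-j s_n / s_j^2; since
  4^(n-j) s_n^2 / s_j^2 \<le> (4\<lambda>^2)^(n-j), this geometric sum is O(a_n).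
\<close>

section \<open>Averages over sets of positive measure\<close>

definition average :: "'a measure \<Rightarrow> 'a set \<Rightarrow> ('a \<Rightarrow> 'b::{banach, second_countable_topology}) \<Rightarrow> 'b"
  where "average M S f = (1 / measure M S) *\<^sub>R (LINT z:S|M. f z)"

lemma average_add:
  assumes "set_integrable M S f" "set_integrable M S g"
  shows "average M S (\<lambda>z. f z + g z) = average M S f + average M S g"
  using assms by (simp add: average_def scaleR_add_right)

lemma norm_average_minus_le:
  fixes f :: "'a \<Rightarrow> 'b::{banach, second_countable_topology}"
  assumes S: "S \<in> sets M" and pos: "measure M S > 0" and f: "set_integrable M S f"
    and bound: "\<And>z. z \<in> S \<Longrightarrow> norm (f z - c) \<le> B"
  shows "norm (average M S f - c) \<le> B"
proof -
  have fin: "emeasure M S \<noteq> \<infinity>"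
    using pos measure_zero_top by fastforce
  have const: "set_integrable M S (\<lambda>_. a)" for a :: "'c::{banach, second_countable_topology}"
    using S fin by (simp add: set_integrable_def less_top)
  have diff: "set_integrable M S (\<lambda>z. f z - c)"
    using f const by (rule set_integral_diff)
  have "average M S f - c = (1 / measure M S) *\<^sub>R (LINT z:S|M. f z - c)"
    using pos S fin
    by (simp add: average_def set_integral_diff(2)[OF f const] set_integral_const scaleR_diff_right)
  then have "norm (average M S f - c) = (1 / measure M S) * norm (LINT z:S|M. f z - c)"
    using pos by simp
  also have "\<dots> \<le> (1 / measure M S) * (LINT z:S|M. B)"
  proof (intro mult_left_mono order_trans[OF set_integral_norm_bound[OF diff]])
    show "(LINT z:S|M. norm (f z - c)) \<le> (LINT z:S|M. B)"
      using set_integrable_norm[OF diff] const bound by (rule set_integral_mono)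
  qed (use pos in simp)
  also have "\<dots> = B"
    using S fin pos by (simp add: set_integral_const)
  finally show ?thesis .
qed

lemma norm_average_diff_le:
  fixes f :: "'a \<Rightarrow> 'b::{banach, second_countable_topology}"
  assumes R: "R \<in> sets M" "measure M R > 0" and Q: "Q \<in> sets M" "measure M Q > 0"
    and "R \<subseteq> Q" and f: "set_integrable M Q f"
    and osc: "\<And>z z'. z \<in> Q \<Longrightarrow> z' \<in> Q \<Longrightarrow> norm (f z - f z') \<le> B"
  shows "norm (average M R f - average M Q f) \<le> 2 * B"
proof -
  obtain z0 where "z0 \<in> R"
    using R(2) by (metis equals0I measure_empty less_irrefl)
  then have z0: "z0 \<in> Q" using \<open>R \<subseteq> Q\<close> by blast
  have "norm (average M R f - f z0) \<le> B"
    using R set_integrable_subset[OF f R(1) \<open>R \<subseteq> Q\<close>] osc z0 \<open>R \<subseteq> Q\<close>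
    by (intro norm_average_minus_le) auto
  moreover have "norm (average M Q f - f z0) \<le> B"
    using Q f osc z0 by (intro norm_average_minus_le) auto
  ultimately show ?thesis
    using norm_triangle_ineq4[of "average M R f - f z0" "average M Q f - f z0"] by simp
qed

lemma norm_cauchy_kernel_diff:
  assumes "z \<noteq> y" "z' \<noteq> y"
  shows "cmod (cauchy_kernel (z - y) - cauchy_kernel (z' - y)) = cmod (z' - z) / (cmod (z - y) * cmod (z' - y))"
proof -
  have "cauchy_kernel (z - y) - cauchy_kernel (z' - y) = (z' - z) / ((z - y) * (z' - y))"
    using assms by (simp add: cauchy_kernel_def field_simps)
  then show ?thesis by (simp add: norm_divide norm_mult)
qed

definition gap :: "real \<Rightarrow> real"
  where "gap L = 1 - 2 * L"

definition osc_const :: "real \<Rightarrow> real"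
  where "osc_const L = 2 / (gap L ^ 2 * (1 - 4 * L ^ 2))"

definition mart_const :: "real \<Rightarrow> real"
  where "mart_const L = 2 * osc_const L + 4 / gap L"

lemma gap_pos: "L < 1/2 \<Longrightarrow> 0 < gap L"
  by (simp add: gap_def)

lemma mart_const_pos:
  assumes "0 \<le> L" "L < 1/2"
  shows "0 < mart_const L"
proof -
  have "L ^ 2 < (1/2) ^ 2" using assms by (intro power_strict_mono) auto
  then have "0 < osc_const L" using gap_pos[OF assms(2)] by (simp add: osc_const_def power2_eq_square)
  then show ?thesis using gap_pos[OF assms(2)] by (simp add: mart_const_def add_pos_pos)
qed

section \<open>Geometry of the squares\<close>

locale cantor_dust =
  fixes lam :: "nat \<Rightarrow> real" and L :: real
  assumes ratio_ge: "\<And>n. n \<ge> 1 \<Longrightarrow> 1/4 \<le> lam n"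
    and ratio_le: "\<And>n. n \<ge> 1 \<Longrightarrow> lam n \<le> L"
    and L_less_half: "L < 1/2"
begin

lemma L_nonneg: "0 \<le> L"
  using ratio_ge[of 1] ratio_le[of 1] by simp

lemma gap_L_pos: "0 < gap L"
  using gap_pos[OF L_less_half] .

lemma side_0 [simp]: "side lam 0 = 1"
  by (simp add: side_def)

lemma side_Suc: "side lam (Suc j) = side lam j * lam (Suc j)"
  by (simp add: side_def prod.nat_ivl_Suc' mult.commute)

lemma side_pos: "0 < side lam j"
proof (induction j)
  case (Suc j)
  then show ?case using ratio_ge[of "Suc j"] by (simp add: side_Suc)
qed simp

lemma side_Suc_le: "side lam (Suc j) \<le> side lam j"
  using ratio_le[of "Suc j"] L_less_half side_pos[of j] by (simp add: side_Suc mult_left_le)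

lemma side_antimono: "j \<le> n \<Longrightarrow> side lam n \<le> side lam j"
  by (induction n rule: dec_induct) (auto intro: order_trans[OF side_Suc_le])

lemma side_Suc_ge: "side lam j / 4 \<le> side lam (Suc j)"
  using ratio_ge[of "Suc j"] side_pos[of j] by (simp add: side_Suc)

lemma side_le_geometric: "j \<le> n \<Longrightarrow> side lam n \<le> side lam j * L ^ (n - j)"
proof (induction n rule: dec_induct)
  case (step n)
  have "side lam (Suc n) = side lam n * lam (Suc n)" by (rule side_Suc)
  also have "\<dots> \<le> side lam j * L ^ (n - j) * L"
    using step side_pos[of n] ratio_ge[of "Suc n"] ratio_le[of "Suc n"] by (intro mult_mono) auto
  also have "\<dots> = side lam j * L ^ (Suc n - j)"
    using step by (simp add: Suc_diff_le)
  finally show ?case .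
qed simp

lemma side_gap: "gap L * side lam j \<le> side lam j - 2 * side lam (Suc j)"
  using ratio_le[of "Suc j"] side_pos[of j] by (simp add: side_Suc gap_def algebra_simps)

lemma sq_corner_snoc:
  "sq_corner lam (u @ [d]) = sq_corner lam u
     + complex_of_real (side lam (length u) - side lam (Suc (length u))) * corner_off d"
  by (simp add: sq_corner_def nth_append)

lemma mem_sq_iff:
  "p \<in> sq lam w \<longleftrightarrow>
     0 \<le> Re p - Re (sq_corner lam w) \<and> Re p - Re (sq_corner lam w) \<le> side lam (length w) \<and>
     0 \<le> Im p - Im (sq_corner lam w) \<and> Im p - Im (sq_corner lam w) \<le> side lam (length w)"
proof
  have "p = sq_corner lam w + complex_of_real (Re p - Re (sq_corner lam w))
              + \<i> * complex_of_real (Im p - Im (sq_corner lam w))"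
    by (simp add: complex_eq_iff)
  then show "p \<in> sq lam w" if "0 \<le> Re p - Re (sq_corner lam w) \<and> Re p - Re (sq_corner lam w) \<le> side lam (length w) \<and>
     0 \<le> Im p - Im (sq_corner lam w) \<and> Im p - Im (sq_corner lam w) \<le> side lam (length w)"
    using that unfolding sq_def by blast
qed (auto simp: sq_def)

lemma sq_snoc_subset: "sq lam (u @ [d]) \<subseteq> sq lam u"
proof
  fix p assume p: "p \<in> sq lam (u @ [d])"
  define t where "t = side lam (length u) - side lam (Suc (length u))"
  have "0 \<le> t" using side_Suc_le[of "length u"] by (simp add: t_def)
  moreover have "0 \<le> Re (corner_off d) \<and> Re (corner_off d) \<le> 1 \<and>
      0 \<le> Im (corner_off d) \<and> Im (corner_off d) \<le> 1"
    by (simp add: corner_off_def)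
  ultimately have "0 \<le> t * Re (corner_off d) \<and> t * Re (corner_off d) \<le> t \<and>
      0 \<le> t * Im (corner_off d) \<and> t * Im (corner_off d) \<le> t"
    by (simp add: mult_left_le)
  then show "p \<in> sq lam u" using p by (auto simp: mem_sq_iff sq_corner_snoc t_def)
qed

lemma abs_unit_shift_ge:
  fixes a t s x y :: real
  assumes "\<bar>a\<bar> = 1" "0 \<le> x" "x \<le> s" "0 \<le> y" "y \<le> s"
  shows "t - s \<le> \<bar>t * a + (x - y)\<bar>"
  using assms by (cases "a \<ge> 0") auto

lemma dist_sibling_squares:
  assumes "d \<noteq> e" "d < 4" "e < 4" and p: "p \<in> sq lam (u @ [d])" and q: "q \<in> sq lam (u @ [e])"
  shows "gap L * side lam (length u) \<le> cmod (p - q)"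
proof -
  define t s where "t = side lam (length u) - side lam (Suc (length u))"
    and "s = side lam (Suc (length u))"
  define x y x' y' where "x = Re p - Re (sq_corner lam u) - t * Re (corner_off d)"
    and "y = Im p - Im (sq_corner lam u) - t * Im (corner_off d)"
    and "x' = Re q - Re (sq_corner lam u) - t * Re (corner_off e)"
    and "y' = Im q - Im (sq_corner lam u) - t * Im (corner_off e)"
  have box: "0 \<le> x" "x \<le> s" "0 \<le> y" "y \<le> s" "0 \<le> x'" "x' \<le> s" "0 \<le> y'" "y' \<le> s"
    using p q by (auto simp: mem_sq_iff sq_corner_snoc t_def s_def x_def y_def x'_def y'_def)
  have Re: "Re (p - q) = t * Re (corner_off d - corner_off e) + (x - x')"
    and Im: "Im (p - q) = t * Im (corner_off d - corner_off e) + (y - y')"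
    by (simp_all add: x_def y_def x'_def y'_def algebra_simps)
  have "\<bar>Re (corner_off d - corner_off e)\<bar> = 1 \<or> \<bar>Im (corner_off d - corner_off e)\<bar> = 1"
    using assms(1-3) by (auto simp: corner_off_def)
  then have "t - s \<le> \<bar>Re (p - q)\<bar> \<or> t - s \<le> \<bar>Im (p - q)\<bar>"
    unfolding Re Im using box abs_unit_shift_ge by blast
  then have "t - s \<le> cmod (p - q)"
    using abs_Re_le_cmod[of "p - q"] abs_Im_le_cmod[of "p - q"] by linarith
  then show ?thesis
    using side_gap[of "length u"] by (simp add: t_def s_def)
qed

lemma words_SucE:
  assumes "w \<in> words (Suc n)"
  obtains u d where "w = u @ [d]" "u \<in> words n" "d < 4"
proof -
  have "w \<noteq> []" using assms by (auto simp: words_def)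
  then obtain u d where "w = u @ [d]" by (metis rev_exhaust)
  with assms that show ?thesis by (auto simp: words_def)
qed

lemma take_in_words: "w \<in> words n \<Longrightarrow> j \<le> n \<Longrightarrow> take j w \<in> words j"
  by (auto simp: words_def dest: in_set_takeD)

lemma nth_word_less: "w \<in> words n \<Longrightarrow> j < n \<Longrightarrow> w ! j < 4"
  unfolding words_def using nth_mem by fastforce

lemma sq_disjoint: "v \<in> words n \<Longrightarrow> w \<in> words n \<Longrightarrow> v \<noteq> w \<Longrightarrow> sq lam v \<inter> sq lam w = {}"
proof (induction n arbitrary: v w)
  case 0
  then show ?case by (simp add: words_def)
next
  case (Suc n)
  obtain u d where v: "v = u @ [d]" "u \<in> words n" "d < 4"
    using Suc.prems(1) by (rule words_SucE)
  obtain u' e where w: "w = u' @ [e]" "u' \<in> words n" "e < 4"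
    using Suc.prems(2) by (rule words_SucE)
  show ?case
  proof (cases "u = u'")
    case True
    then have "d \<noteq> e" using Suc.prems(3) v w by auto
    have "0 < gap L * side lam (length u)" using gap_L_pos side_pos by simp
    then show ?thesis
      using dist_sibling_squares[OF \<open>d \<noteq> e\<close> v(3) w(3)] v(1) w(1) True by force
  next
    case False
    then show ?thesis using Suc.IH v w sq_snoc_subset by blast
  qed
qed

lemma sq_take_subset: "j \<le> length w \<Longrightarrow> sq lam w \<subseteq> sq lam (take j w)"
proof (induction "length w - j" arbitrary: j)
  case (Suc k)
  then have "sq lam w \<subseteq> sq lam (take (Suc j) w)" by simp
  also have "take (Suc j) w = take j w @ [w ! j]"
    using Suc by (simp add: take_Suc_conv_app_nth)
  also have "sq lam \<dots> \<subseteq> sq lam (take j w)" by (rule sq_snoc_subset)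
  finally show ?case .
qed simp

lemma cantorK_in_some_sq: "y \<in> cantorK lam \<Longrightarrow> \<exists>v\<in>words n. y \<in> sq lam v"
  unfolding cantorK_def gen_def by auto

lemma exit_level:
  assumes w: "w \<in> words n" and y: "y \<in> cantorK lam" and "y \<notin> sq lam w"
  obtains j where "j < n" "y \<in> sq lam (take j w)" "y \<notin> sq lam (take (Suc j) w)"
proof -
  have "\<exists>j<n. y \<in> sq lam (take j w) \<and> y \<notin> sq lam (take (Suc j) w)"
  proof (rule ccontr)
    assume none: "\<not> ?thesis"
    have "y \<in> sq lam (take i w)" if "i \<le> n" for i
      using that
    proof (induction i)
      case 0
      then show ?case using cantorK_in_some_sq[OF y, of 0] by (simp add: words_def)
    qed (use none in auto)
    from this[of n] show False using w \<open>y \<notin> sq lam w\<close> by (simp add: words_def)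
  qed
  then show ?thesis using that by blast
qed

lemma dist_beyond_exit_level:
  assumes w: "w \<in> words n" and j: "j < n" and y: "y \<in> cantorK lam"
    and y_in: "y \<in> sq lam (take j w)" and y_out: "y \<notin> sq lam (take (Suc j) w)"
    and z: "z \<in> sq lam (take (Suc j) w)"
  shows "gap L * side lam j \<le> cmod (z - y)"
proof -
  obtain v where v: "v \<in> words (Suc j)" "y \<in> sq lam v"
    using cantorK_in_some_sq[OF y] by blast
  have v_split: "v = take j v @ [v ! j]"
    using v(1) by (simp add: words_def take_Suc_conv_app_nth[symmetric])
  have w_split: "take (Suc j) w = take j w @ [w ! j]"
    using w j by (simp add: words_def take_Suc_conv_app_nth)
  have "y \<in> sq lam (take j v)"
    using v sq_take_subset[of j v] by (auto simp: words_def)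
  then have same_parent: "take j v = take j w"
    using sq_disjoint[OF take_in_words[OF v(1), of j] take_in_words[OF w, of j]] y_in j by auto
  have "w ! j \<noteq> v ! j" using y_out v(2) v_split w_split same_parent by metis
  moreover have "z \<in> sq lam (take j w @ [w ! j])" "y \<in> sq lam (take j w @ [v ! j])"
    using z v(2) v_split w_split same_parent by simp_all
  moreover have "length (take j w) = j" using w j by (simp add: words_def)
  ultimately show ?thesis
    using dist_sibling_squares[OF _ nth_word_less[OF w j] nth_word_less[OF v(1)]] by force
qed

lemma dist_outside_sq:
  assumes w: "w \<in> words n" and z: "z \<in> sq lam w" and y: "y \<in> cantorK lam" "y \<notin> sq lam w"
  shows "gap L * side lam n \<le> cmod (z - y)"
proof -
  obtain j where j: "j < n" "y \<in> sq lam (take j w)" "y \<notin> sq lam (take (Suc j) w)"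
    by (rule exit_level[OF w y])
  have "z \<in> sq lam (take (Suc j) w)"
    using z sq_take_subset[of "Suc j" w] w j by (auto simp: words_def)
  then have "gap L * side lam j \<le> cmod (z - y)"
    using dist_beyond_exit_level[OF w j(1) y(1) j(2,3)] by simp
  moreover have "side lam n \<le> side lam j" using j by (intro side_antimono) simp
  ultimately show ?thesis using gap_L_pos by (smt (verit) mult_left_mono)
qed

lemma dist_in_sq: "z \<in> sq lam w \<Longrightarrow> z' \<in> sq lam w \<Longrightarrow> cmod (z - z') \<le> 2 * side lam (length w)"
  using cmod_le[of "z - z'"] by (auto simp: mem_sq_iff)

definition ancestor_weight :: "nat list \<Rightarrow> complex \<Rightarrow> real"
  where "ancestor_weight w y =
    (\<Sum>j<length w. indicator (sq lam (take j w)) y / (gap L * side lam j) ^ 2)"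

lemma ancestor_weight_nonneg: "0 \<le> ancestor_weight w y"
  by (simp add: ancestor_weight_def sum_nonneg)

lemma kernel_oscillation_le:
  assumes w: "w \<in> words n" and y: "y \<in> cantorK lam" "y \<notin> sq lam w"
    and z: "z \<in> sq lam w" and z': "z' \<in> sq lam w"
  shows "cmod (cauchy_kernel (z - y) - cauchy_kernel (z' - y)) \<le> 2 * side lam n * ancestor_weight w y"
proof -
  obtain j where j: "j < n" "y \<in> sq lam (take j w)" "y \<notin> sq lam (take (Suc j) w)"
    by (rule exit_level[OF w y])
  define D where "D = gap L * side lam j"
  have D: "0 < D" using gap_L_pos side_pos by (simp add: D_def)
  have "sq lam w \<subseteq> sq lam (take (Suc j) w)"
    using w j sq_take_subset[of "Suc j" w] by (simp add: words_def)
  then have far: "D \<le> cmod (z - y)" "D \<le> cmod (z' - y)"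
    using dist_beyond_exit_level[OF w j(1) y(1) j(2,3)] z z' by (auto simp: D_def)
  have "z \<noteq> y" "z' \<noteq> y" using far D by auto
  then have "cmod (cauchy_kernel (z - y) - cauchy_kernel (z' - y)) = cmod (z' - z) / (cmod (z - y) * cmod (z' - y))"
    by (rule norm_cauchy_kernel_diff)
  also have "\<dots> \<le> 2 * side lam n / (D * D)"
    using dist_in_sq[OF z' z] w far D side_pos[of n] by (intro frac_le mult_mono) (auto simp: words_def)
  also have "\<dots> = 2 * side lam n * (indicator (sq lam (take j w)) y / (gap L * side lam j) ^ 2)"
    using j by (simp add: D_def power2_eq_square)
  also have "\<dots> \<le> 2 * side lam n * ancestor_weight w y"
    unfolding ancestor_weight_def using w j side_pos[of n]
    by (intro mult_left_mono member_le_sum[of j]) (auto simp: words_def)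
  finally show ?thesis .
qed

lemma sum_inverse_side_squares_le:
  "2 * side lam n * (\<Sum>j<n. (1 / 4 ^ j) / (gap L * side lam j) ^ 2) \<le> osc_const L * a_seq lam n"
proof -
  define r where "r = 4 * L ^ 2"
  have "L * L < 1/2 * (1/2)"
    using L_nonneg L_less_half by (intro mult_strict_mono) auto
  then have r: "0 \<le> r" "r < 1"
    by (simp_all add: r_def power2_eq_square)
  have ratio_bound: "4 ^ n * side lam n ^ 2 / (4 ^ j * side lam j ^ 2) \<le> r ^ (n - Suc j)" if "j < n" for j
  proof -
    have "side lam n ^ 2 \<le> (side lam j * L ^ (n - j)) ^ 2"
      using that side_pos[of n] by (intro power_mono side_le_geometric) auto
    then have quotient: "side lam n ^ 2 / side lam j ^ 2 \<le> (L ^ 2) ^ (n - j)"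
      using side_pos[of j] by (simp add: divide_simps power_mult_distrib power_mult[symmetric] mult.commute)
    have "(4::real) ^ n = 4 ^ j * 4 ^ (n - j)"
      using that by (simp add: power_add[symmetric])
    then have "4 ^ n * side lam n ^ 2 / (4 ^ j * side lam j ^ 2) = 4 ^ (n - j) * (side lam n ^ 2 / side lam j ^ 2)"
      using side_pos[of j] by (simp add: field_simps)
    also have "\<dots> \<le> 4 ^ (n - j) * (L ^ 2) ^ (n - j)"
      using quotient by (intro mult_left_mono) auto
    also have "\<dots> = r ^ (n - j)" by (simp add: r_def power_mult_distrib)
    also have "\<dots> \<le> r ^ (n - Suc j)" using r that by (intro power_decreasing) auto
    finally show ?thesis .
  qed
  have "(\<Sum>j<n. 4 ^ n * side lam n ^ 2 / (4 ^ j * side lam j ^ 2)) \<le> (\<Sum>j<n. r ^ (n - Suc j))"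
    using ratio_bound by (intro sum_mono) simp
  also have "\<dots> = (1 - r ^ n) / (1 - r)"
    using r by (simp add: sum.nat_diff_reindex sum_gp_strict)
  also have "\<dots> \<le> 1 / (1 - r)"
    using r by (simp add: divide_right_mono)
  finally have geometric: "(\<Sum>j<n. 4 ^ n * side lam n ^ 2 / (4 ^ j * side lam j ^ 2)) \<le> 1 / (1 - r)" .
  have "2 * side lam n * (\<Sum>j<n. (1 / 4 ^ j) / (gap L * side lam j) ^ 2)
      = 2 / (gap L ^ 2 * 4 ^ n * side lam n) * (\<Sum>j<n. 4 ^ n * side lam n ^ 2 / (4 ^ j * side lam j ^ 2))"
    using side_pos[of n] gap_L_pos by (simp add: sum_distrib_left power2_eq_square field_simps)
  also have "\<dots> \<le> 2 / (gap L ^ 2 * 4 ^ n * side lam n) * (1 / (1 - r))"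
    using geometric side_pos[of n] gap_L_pos by (intro mult_left_mono) auto
  also have "\<dots> = osc_const L * a_seq lam n"
    by (simp add: osc_const_def a_seq_def r_def field_simps)
  finally show ?thesis .
qed

end

section \<open>The Cauchy potential of the Cantor measure\<close>

definition potential :: "complex measure \<Rightarrow> complex set \<Rightarrow> complex \<Rightarrow> complex"
  where "potential \<mu> A z = (LINT y:A|\<mu>. cauchy_kernel (z - y))"

lemma S_mart_eq_average: "S_mart \<mu> K Q = average \<mu> Q (potential \<mu> (K - Q))"
  by (simp add: S_mart_def average_def potential_def)

lemma S_rel_eq_average: "S_rel \<mu> Q R = average \<mu> R (potential \<mu> (Q - R))"
  by (simp add: S_rel_def average_def potential_def)

locale cantor_dust_measure = cantor_dust +
  fixes \<mu> :: "complex measure"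
  assumes cantor_measure: "cantor_measure lam \<mu>"
begin

lemma prob_space: "prob_space \<mu>"
  using cantor_measure by (simp add: cantor_measure_def)

lemma sets_\<mu> [measurable_cong]: "sets \<mu> = sets borel"
  using cantor_measure by (simp add: cantor_measure_def)

lemma emeasure_finite: "emeasure \<mu> A \<noteq> \<infinity>"
  using prob_space by (simp add: prob_space_def finite_measure.emeasure_finite)

lemma measure_le_1: "measure \<mu> A \<le> 1"
  using prob_space.prob_le_1[OF prob_space] by simp

lemma measure_gen: "Q \<in> gen lam n \<Longrightarrow> measure \<mu> Q = 1 / 4 ^ n"
  using cantor_measure by (simp add: cantor_measure_def)

lemma measure_gen_pos: "Q \<in> gen lam n \<Longrightarrow> 0 < measure \<mu> Q"
  by (simp add: measure_gen)

lemma sq_closed: "closed (sq lam w)"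
proof -
  have "sq lam w = {p. 0 \<le> Re p - Re (sq_corner lam w) \<and> Re p - Re (sq_corner lam w) \<le> side lam (length w) \<and>
      0 \<le> Im p - Im (sq_corner lam w) \<and> Im p - Im (sq_corner lam w) \<le> side lam (length w)}"
    using mem_sq_iff by blast
  also have "closed \<dots>"
    by (intro closed_Collect_conj closed_Collect_le continuous_intros)
  finally show ?thesis .
qed

lemma gen_borel: "Q \<in> gen lam n \<Longrightarrow> Q \<in> sets borel"
  using sq_closed by (auto simp: gen_def)

lemma cantorK_borel: "cantorK lam \<in> sets borel"
proof -
  have "finite (words n)" for n
    using finite_lists_length_eq[of "{0..<(4::nat)}" n]
    by (auto simp: words_def conj_commute)
  then have "closed (cantorK lam)"
    unfolding cantorK_def gen_def by (intro closed_INT ballI closed_Union) (auto intro: sq_closed)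
  then show ?thesis by simp
qed

lemma AE_cantorK: "AE y in \<mu>. y \<in> cantorK lam"
proof -
  have "measure \<mu> (cantorK lam) = 1"
    using cantor_measure by (simp add: cantor_measure_def measure_def)
  then show ?thesis using prob_space.AE_prob_1[OF prob_space] by simp
qed

lemma potential_measurable:
  assumes [measurable]: "A \<in> sets borel"
  shows "potential \<mu> A \<in> borel_measurable \<mu>"
proof -
  have "(\<lambda>(z, y). indicator A y *\<^sub>R cauchy_kernel (z - y)) \<in> borel_measurable (\<mu> \<Otimes>\<^sub>M \<mu>)"
    unfolding cauchy_kernel_def by measurable
  then have "(\<lambda>z. \<integral>y. indicator A y *\<^sub>R cauchy_kernel (z - y) \<partial>\<mu>) \<in> borel_measurable \<mu>"
    using sigma_finite_measure.borel_measurable_lebesgue_integral[OF prob_space_imp_sigma_finite[OF prob_space],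
        of "\<lambda>z y. indicator A y *\<^sub>R cauchy_kernel (z - y)" \<mu>]
    by simp
  then show ?thesis unfolding potential_def[abs_def] set_lebesgue_integral_def .
qed

lemma potential_bound:
  assumes A [measurable]: "A \<in> sets borel" and d: "0 < d"
    and far: "\<And>y. y \<in> A \<Longrightarrow> y \<in> cantorK lam \<Longrightarrow> d \<le> cmod (z - y)"
  shows "set_integrable \<mu> A (\<lambda>y. cauchy_kernel (z - y))"
    and "cmod (potential \<mu> A z) \<le> measure \<mu> A / d"
proof -
  have bound: "AE y in \<mu>. y \<in> A \<longrightarrow> cmod (cauchy_kernel (z - y)) \<le> 1 / d"
    using AE_cantorK
  proof eventually_elim
    case (elim y)
    show ?case
    proof
      assume "y \<in> A"
      then have "d \<le> cmod (z - y)" using far elim by blast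
      then show "cmod (cauchy_kernel (z - y)) \<le> 1 / d"
        using d by (simp add: cauchy_kernel_def norm_divide divide_simps)
    qed
  qed
  have const: "set_integrable \<mu> A (\<lambda>_. 1 / d)"
    using emeasure_finite by (simp add: set_integrable_def less_top)
  have kernel_measurable: "set_borel_measurable \<mu> A (\<lambda>y. cauchy_kernel (z - y))"
    unfolding set_borel_measurable_def cauchy_kernel_def by measurable
  show int: "set_integrable \<mu> A (\<lambda>y. cauchy_kernel (z - y))"
    using const kernel_measurable by (rule set_integrable_bound) (use bound d in auto)
  have "cmod (potential \<mu> A z) \<le> (LINT y:A|\<mu>. cmod (cauchy_kernel (z - y)))"
    unfolding potential_def by (rule set_integral_norm_bound[OF int])
  also have "\<dots> \<le> (LINT y:A|\<mu>. 1 / d)"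
    using set_integrable_norm[OF int] const bound by (rule set_integral_mono_AE)
  also have "\<dots> = measure \<mu> A / d"
    using emeasure_finite by (simp add: set_integral_const)
  finally show "cmod (potential \<mu> A z) \<le> measure \<mu> A / d" .
qed

lemma potential_outside_gen:
  assumes Q: "Q \<in> gen lam n" and A: "A \<in> sets borel" "A \<inter> Q = {}" and z: "z \<in> Q"
  shows "set_integrable \<mu> A (\<lambda>y. cauchy_kernel (z - y))"
    and "cmod (potential \<mu> A z) \<le> measure \<mu> A / (gap L * side lam n)"
proof -
  obtain w where w: "w \<in> words n" "Q = sq lam w" using Q by (auto simp: gen_def)
  have d: "0 < gap L * side lam n" using gap_L_pos side_pos by simp
  have far: "gap L * side lam n \<le> cmod (z - y)" if "y \<in> A" "y \<in> cantorK lam" for y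
    using dist_outside_sq[OF w(1)] that A(2) z w(2) by blast
  show "set_integrable \<mu> A (\<lambda>y. cauchy_kernel (z - y))"
    and "cmod (potential \<mu> A z) \<le> measure \<mu> A / (gap L * side lam n)"
    using potential_bound[OF A(1) d far] by blast+
qed

lemma potential_set_integrable:
  assumes Q: "Q \<in> gen lam n" and A: "A \<in> sets borel" "A \<inter> Q = {}"
    and S [measurable]: "S \<in> sets borel" and "S \<subseteq> Q"
  shows "set_integrable \<mu> S (potential \<mu> A)"
proof (rule set_integrable_bound)
  define B where "B = 1 / (gap L * side lam n)"
  have "0 < B" using gap_L_pos side_pos by (simp add: B_def)
  show "set_integrable \<mu> S (\<lambda>_. B)"
    using emeasure_finite by (simp add: set_integrable_def less_top)
  show "set_borel_measurable \<mu> S (potential \<mu> A)"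
    using potential_measurable[OF A(1)] by (simp add: set_borel_measurable_def)
  have "measure \<mu> A / (gap L * side lam n) \<le> B"
    using measure_le_1[of A] gap_L_pos side_pos[of n] by (simp add: B_def divide_right_mono)
  then have "cmod (potential \<mu> A z) \<le> B" if "z \<in> Q" for z
    using potential_outside_gen(2)[OF Q A that] by linarith
  then show "AE z in \<mu>. z \<in> S \<longrightarrow> cmod (potential \<mu> A z) \<le> norm B"
    using \<open>S \<subseteq> Q\<close> \<open>0 < B\<close> by auto
qed

lemma integral_ancestor_weight:
  assumes "w \<in> words n"
  shows "integrable \<mu> (ancestor_weight w)"
    and "(\<integral>y. ancestor_weight w y \<partial>\<mu>) = (\<Sum>j<n. (1 / 4 ^ j) / (gap L * side lam j) ^ 2)"
proof -
  have ancestor: "sq lam (take j w) \<in> gen lam j" if "j < n" for j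
    using take_in_words[OF assms, of j] that by (simp add: gen_def)
  have int: "integrable \<mu> (indicat_real (sq lam (take j w)))" for j
    using sq_closed emeasure_finite by (simp add: less_top)
  show "integrable \<mu> (ancestor_weight w)"
    unfolding ancestor_weight_def[abs_def] using int by auto
  show "(\<integral>y. ancestor_weight w y \<partial>\<mu>) = (\<Sum>j<n. (1 / 4 ^ j) / (gap L * side lam j) ^ 2)"
    using assms int sq_closed measure_gen[OF ancestor]
    by (simp add: ancestor_weight_def words_def integral_sum)
qed

lemma potential_oscillation:
  assumes Q: "Q \<in> gen lam n" and A: "A \<in> sets borel" "A \<inter> Q = {}"
    and z: "z \<in> Q" and z': "z' \<in> Q"
  shows "cmod (potential \<mu> A z - potential \<mu> A z') \<le> osc_const L * a_seq lam n"
proof -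
  obtain w where w: "w \<in> words n" "Q = sq lam w" using Q by (auto simp: gen_def)
  define h where "h y = 2 * side lam n * ancestor_weight w y" for y
  have h_nonneg: "0 \<le> h y" for y
    using side_pos[of n] ancestor_weight_nonneg by (simp add: h_def)
  have h_int: "integrable \<mu> h"
    unfolding h_def using integral_ancestor_weight(1)[OF w(1)] by simp
  have h_set_int: "set_integrable \<mu> A h"
    unfolding set_integrable_def by (rule integrable_mult_indicator) (use h_int A(1) in simp_all)
  note Iz = potential_outside_gen(1)[OF Q A z] and Iz' = potential_outside_gen(1)[OF Q A z']
  note diff_int = set_integral_diff(1)[OF Iz Iz']
  have bound: "AE y in \<mu>. y \<in> A \<longrightarrow> cmod (cauchy_kernel (z - y) - cauchy_kernel (z' - y)) \<le> h y"
    using AE_cantorK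
  proof eventually_elim
    case (elim y)
    then show ?case
      using kernel_oscillation_le[OF w(1) elim _ _ _] A(2) z z' w(2) by (auto simp: h_def)
  qed
  have "cmod (potential \<mu> A z - potential \<mu> A z')
      = cmod (LINT y:A|\<mu>. cauchy_kernel (z - y) - cauchy_kernel (z' - y))"
    by (simp add: potential_def set_integral_diff(2)[OF Iz Iz'])
  also have "\<dots> \<le> (LINT y:A|\<mu>. cmod (cauchy_kernel (z - y) - cauchy_kernel (z' - y)))"
    by (rule set_integral_norm_bound[OF diff_int])
  also have "\<dots> \<le> (LINT y:A|\<mu>. h y)"
    using set_integrable_norm[OF diff_int] h_set_int bound by (rule set_integral_mono_AE)
  also have "\<dots> \<le> (\<integral>y. h y \<partial>\<mu>)"
    unfolding set_lebesgue_integral_def using h_set_int h_int h_nonneg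
    by (intro integral_mono) (auto simp: set_integrable_def indicator_def)
  also have "\<dots> = 2 * side lam n * (\<Sum>j<n. (1 / 4 ^ j) / (gap L * side lam j) ^ 2)"
    using integral_ancestor_weight[OF w(1)] by (simp add: h_def)
  also have "\<dots> \<le> osc_const L * a_seq lam n"
    by (rule sum_inverse_side_squares_le)
  finally show ?thesis .
qed

lemma potential_split:
  assumes [measurable]: "A \<in> sets borel" "A1 \<in> sets borel" "A2 \<in> sets borel"
    and "A1 \<inter> A2 = {}" and "AE y in \<mu>. y \<in> A \<longleftrightarrow> y \<in> A1 \<union> A2"
    and "set_integrable \<mu> A1 (\<lambda>y. cauchy_kernel (z - y))"
    and "set_integrable \<mu> A2 (\<lambda>y. cauchy_kernel (z - y))"
  shows "potential \<mu> A z = potential \<mu> A1 z + potential \<mu> A2 z"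
proof -
  have "potential \<mu> A z = (LINT y:A1 \<union> A2|\<mu>. cauchy_kernel (z - y))"
    unfolding potential_def using assms(5)
    by (intro set_integral_cong_set) (auto simp: set_borel_measurable_def cauchy_kernel_def)
  also have "\<dots> = potential \<mu> A1 z + potential \<mu> A2 z"
    unfolding potential_def using assms(4,6,7) by (rule set_integral_Un)
  finally show ?thesis .
qed

lemma average_potential_split:
  assumes R: "R \<in> gen lam n" and P: "P \<in> gen lam k" "R \<subseteq> P"
    and A [measurable]: "A \<in> sets borel" "A1 \<in> sets borel" "A2 \<in> sets borel"
    and "A1 \<inter> P = {}" "A2 \<inter> R = {}" "A1 \<inter> A2 = {}"
    and "AE y in \<mu>. y \<in> A \<longleftrightarrow> y \<in> A1 \<union> A2"
  shows "average \<mu> R (potential \<mu> A)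
    = average \<mu> R (potential \<mu> A1) + average \<mu> R (potential \<mu> A2)"
proof -
  have R_borel [measurable]: "R \<in> sets borel" using R by (rule gen_borel)
  have "potential \<mu> A z = potential \<mu> A1 z + potential \<mu> A2 z" if "z \<in> R" for z
    using assms that potential_outside_gen(1)[OF P(1), of A1 z] potential_outside_gen(1)[OF R, of A2 z]
    by (intro potential_split) auto
  then have "average \<mu> R (potential \<mu> A) = average \<mu> R (\<lambda>z. potential \<mu> A1 z + potential \<mu> A2 z)"
    unfolding average_def by (simp add: set_lebesgue_integral_cong)
  moreover have "set_integrable \<mu> R (potential \<mu> A1)" "set_integrable \<mu> R (potential \<mu> A2)"
    using potential_set_integrable[OF P(1), of A1 R] potential_set_integrable[OF R, of A2 R] assms
    by auto
  ultimately show ?thesis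
    by (simp add: average_add)
qed

lemma norm_potential_siblings_le:
  assumes Rt: "Rt \<in> gen lam n" and R: "R \<in> gen lam (Suc n)" and z: "z \<in> R"
  shows "cmod (potential \<mu> (Rt - R) z) \<le> 4 / gap L * a_seq lam n"
proof -
  have borel: "Rt - R \<in> sets borel" using gen_borel[OF Rt] gen_borel[OF R] by auto
  have "cmod (potential \<mu> (Rt - R) z) \<le> measure \<mu> (Rt - R) / (gap L * side lam (Suc n))"
    using potential_outside_gen(2)[OF R borel _ z] by blast
  also have "\<dots> \<le> (1 / 4 ^ n) / (gap L * (side lam n / 4))"
  proof (rule frac_le)
    have "measure \<mu> (Rt - R) \<le> measure \<mu> Rt"
      using gen_borel[OF Rt] borel emeasure_finite by (intro measure_mono_fmeasurable) (auto simp: fmeasurable_def less_top sets_\<mu>)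
    then show "measure \<mu> (Rt - R) \<le> 1 / 4 ^ n" using measure_gen[OF Rt] by simp
    show "gap L * (side lam n / 4) \<le> gap L * side lam (Suc n)"
      using side_Suc_ge[of n] gap_L_pos by simp
  qed (use gap_L_pos side_pos[of n] in simp_all)
  also have "\<dots> = 4 / gap L * a_seq lam n"
    by (simp add: a_seq_def field_simps)
  finally show ?thesis .
qed

lemma S_mart_diff_bound:
  assumes Q: "Q \<in> gen lam m" and R: "R \<in> gen lam n" and "R \<subseteq> Q"
  shows "cmod (S_mart \<mu> (cantorK lam) R - S_mart \<mu> (cantorK lam) Q - S_rel \<mu> Q R)
    \<le> 2 * osc_const L * a_seq lam m"
proof -
  let ?K = "cantorK lam"
  have [measurable]: "Q \<in> sets borel" "R \<in> sets borel" "?K \<in> sets borel"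
    using gen_borel[OF Q] gen_borel[OF R] cantorK_borel by auto
  have "S_mart \<mu> ?K R = average \<mu> R (potential \<mu> (?K - Q)) + S_rel \<mu> Q R"
    unfolding S_mart_eq_average S_rel_eq_average
    using AE_cantorK \<open>R \<subseteq> Q\<close>
    by (intro average_potential_split[OF R Q]) (auto elim!: eventually_mono)
  moreover have "cmod (average \<mu> R (potential \<mu> (?K - Q)) - average \<mu> Q (potential \<mu> (?K - Q)))
      \<le> 2 * (osc_const L * a_seq lam m)"
    using \<open>R \<subseteq> Q\<close> potential_set_integrable[OF Q, of "?K - Q" Q]
      potential_oscillation[OF Q, of "?K - Q"] measure_gen_pos[OF R] measure_gen_pos[OF Q]
    by (intro norm_average_diff_le) auto
  ultimately show ?thesis
    by (simp add: S_mart_eq_average)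
qed

lemma S_rel_step_bound:
  assumes Q: "Q \<in> gen lam m" and Rt: "Rt \<in> gen lam n" and R: "R \<in> gen lam (Suc n)"
    and "R \<subseteq> Rt" "Rt \<subseteq> Q"
  shows "cmod (S_rel \<mu> Q R - S_rel \<mu> Q Rt) \<le> mart_const L * a_seq lam n"
proof -
  have [measurable]: "Q \<in> sets borel" "Rt \<in> sets borel" "R \<in> sets borel"
    using gen_borel[OF Q] gen_borel[OF Rt] gen_borel[OF R] by auto
  have "S_rel \<mu> Q R = average \<mu> R (potential \<mu> (Q - Rt)) + average \<mu> R (potential \<mu> (Rt - R))"
    unfolding S_rel_eq_average
    using \<open>R \<subseteq> Rt\<close> \<open>Rt \<subseteq> Q\<close> by (intro average_potential_split[OF R Rt]) auto
  moreover have "cmod (average \<mu> R (potential \<mu> (Q - Rt)) - average \<mu> Rt (potential \<mu> (Q - Rt)))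
      \<le> 2 * (osc_const L * a_seq lam n)"
    using \<open>R \<subseteq> Rt\<close> potential_set_integrable[OF Rt, of "Q - Rt" Rt]
      potential_oscillation[OF Rt, of "Q - Rt"] measure_gen_pos[OF R] measure_gen_pos[OF Rt]
    by (intro norm_average_diff_le) auto
  moreover have "cmod (average \<mu> R (potential \<mu> (Rt - R)) - 0) \<le> 4 / gap L * a_seq lam n"
    using potential_set_integrable[OF R, of "Rt - R" R] norm_potential_siblings_le[OF Rt R]
      measure_gen_pos[OF R]
    by (intro norm_average_minus_le) auto
  ultimately show ?thesis
    using norm_triangle_ineq[of "average \<mu> R (potential \<mu> (Q - Rt)) - average \<mu> Rt (potential \<mu> (Q - Rt))"
        "average \<mu> R (potential \<mu> (Rt - R))"]
    by (simp add: S_rel_eq_average mart_const_def algebra_simps)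
qed

end

theorem mainTheorem7:
  fixes \<Lambda> :: real
  assumes "1/4 \<le> \<Lambda>" and "\<Lambda> < 1/2"
  shows "\<exists>C>0. \<forall>lam :: nat \<Rightarrow> real. \<forall>\<mu> :: complex measure.
     (\<forall>n\<ge>1. 1/4 \<le> lam n \<and> lam n \<le> \<Lambda>) \<longrightarrow> cantor_measure lam \<mu> \<longrightarrow>
     ((\<forall>m n Q R. m < n \<longrightarrow> Q \<in> gen lam m \<longrightarrow> R \<in> gen lam n \<longrightarrow> R \<subseteq> Q \<longrightarrow>
         cmod (S_mart \<mu> (cantorK lam) R - S_mart \<mu> (cantorK lam) Q - S_rel \<mu> Q R)
           \<le> C * a_seq lam m) \<and>
      (\<forall>m n Q Rt R. m \<le> n \<longrightarrow> Q \<in> gen lam m \<longrightarrow> Rt \<in> gen lam n \<longrightarrow> R \<in> gen lam (Suc n) \<longrightarrow>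
         R \<subseteq> Rt \<longrightarrow> Rt \<subseteq> Q \<longrightarrow>
         cmod (S_rel \<mu> Q R - S_rel \<mu> Q Rt) \<le> C * a_seq lam n))"
proof (intro exI[of _ "mart_const \<Lambda>"] conjI allI impI)
  show "0 < mart_const \<Lambda>" using assms by (intro mart_const_pos) auto
  fix lam :: "nat \<Rightarrow> real" and \<mu> :: "complex measure"
  assume "\<forall>n\<ge>1. 1/4 \<le> lam n \<and> lam n \<le> \<Lambda>" and "cantor_measure lam \<mu>"
  then interpret cantor_dust_measure lam \<Lambda> \<mu>
    using assms by unfold_locales auto
  {
    fix m n Q R assume "Q \<in> gen lam m" "R \<in> gen lam n" "R \<subseteq> Q"
    then have "cmod (S_mart \<mu> (cantorK lam) R - S_mart \<mu> (cantorK lam) Q - S_rel \<mu> Q R)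
        \<le> 2 * osc_const \<Lambda> * a_seq lam m"
      by (rule S_mart_diff_bound)
    also have "\<dots> \<le> mart_const \<Lambda> * a_seq lam m"
      using gap_L_pos side_pos[of m] by (intro mult_right_mono) (auto simp: mart_const_def a_seq_def)
    finally show "cmod (S_mart \<mu> (cantorK lam) R - S_mart \<mu> (cantorK lam) Q - S_rel \<mu> Q R)
        \<le> mart_const \<Lambda> * a_seq lam m" .
  }
  fix m n Q Rt R
  assume "Q \<in> gen lam m" "Rt \<in> gen lam n" "R \<in> gen lam (Suc n)" "R \<subseteq> Rt" "Rt \<subseteq> Q"
  then show "cmod (S_rel \<mu> Q R - S_rel \<mu> Q Rt) \<le> mart_const \<Lambda> * a_seq lam n"
    by (rule S_rel_step_bound)
qed

end
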